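(* Let $R$ be a valuation domain, $J/A$ a type with $J=\bigcup_{\nu<\omega_1} r_\nu^{-1}R$ as in the context, and let $\delta<\omega_1$ be a limit ordinal such that $R/\bigcap_{\nu<\delta} r_\nu A$ is not complete. Suppose $\{e^\tau_\sigma:\sigma<\tau<\delta\}\subseteq R^*$ satisfies $e^\rho_\tau e^\tau_\sigma-e^\rho_\sigma\in r_\sigma A$ for all $\sigma<\tau<\rho<\delta$. Then there are units $e^\delta_{\sigma,j}\in R^*$ ($\sigma<\delta$, $j\in\{0,1\}$) such that $e^\delta_{\tau,j}e^\tau_\sigma-e^\delta_{\sigma,j}\in r_\sigma A$ for all $\sigma<\tau<\delta$ and $j\in\{0,1\}$, but there is no family of units $\{c_\sigma:\sigma<\delta\}$ together with units $c_{\delta,0},c_{\delta,1}\in R^*$ such that $c_\tau-e^\tau_\sigma c_\sigma\in r_\sigma A$ for all $\sigma<\tau<\delta$ and $c_{\delta,j}-e^\delta_{\sigma,j}c_\sigma\in r_\sigma A$ for all $\sigma<\delta$ and $j\in\{0,1\}$.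
   Context: $R$ is a valuation domain with quotient field $Q\neq R$ and unit group $R^*$. $A\subseteq J$ are $R$-submodules of $Q$ with $J=\bigcup_{\nu<\omega_1} r_\nu^{-1}R$, $r_\nu\in R\setminus\{0\}$, $r_\mu\mid r_\nu$ for $\mu<\nu$. $R/\bigcap_{\nu<\delta} r_\nu A$ carries the linear topology with basic neighborhoods of $0$ the images of $r_\nu A$ ($\nu<\delta$); complete means every Cauchy sequence converges. *)

theory Defs
  imports Main "HOL-Library.Countable_Set"
begin

text \<open>The quotient field Q is modelled as the ambient field type 'a; R is a subset of it.\<close>

definition valuation_domain :: "'a::field set \<Rightarrow> bool" where
  "valuation_domain R \<longleftrightarrow>
     0 \<in> R \<and> 1 \<in> R \<and>
     (\<forall>x\<in>R. \<forall>y\<in>R. x + y \<in> R \<and> x * y \<in> R \<and> - x \<in> R) \<and>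
     (\<forall>q. q \<noteq> 0 \<longrightarrow> q \<in> R \<or> inverse q \<in> R)"

definition quotient_field_of :: "'a::field set \<Rightarrow> bool" where
  "quotient_field_of R \<longleftrightarrow> (\<forall>q. \<exists>a\<in>R. \<exists>b\<in>R. b \<noteq> 0 \<and> q = a / b)"

definition units_of_dom :: "'a::field set \<Rightarrow> 'a set" where
  "units_of_dom R = {x. x \<in> R \<and> x \<noteq> 0 \<and> inverse x \<in> R}"

definition submodule_of :: "'a::field set \<Rightarrow> 'a set \<Rightarrow> bool" where
  "submodule_of R M \<longleftrightarrow> 0 \<in> M \<and> (\<forall>x\<in>M. \<forall>y\<in>M. x + y \<in> M) \<and>
     (\<forall>r\<in>R. \<forall>x\<in>M. r * x \<in> M)"

definition scale_set :: "'a::field \<Rightarrow> 'a set \<Rightarrow> 'a set" where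
  "scale_set r A = {r * a | a. a \<in> A}"

definition dvd_in :: "'a::field set \<Rightarrow> 'a \<Rightarrow> 'a \<Rightarrow> bool" where
  "dvd_in R a b \<longleftrightarrow> (\<exists>t\<in>R. b = t * a)"

definition omega1_type :: "'i::wellorder itself \<Rightarrow> bool" where
  "omega1_type _ \<longleftrightarrow> \<not> countable (UNIV :: 'i set) \<and> (\<forall>i::'i. countable {..<i})"

definition is_limit :: "'i::wellorder \<Rightarrow> bool" where
  "is_limit d \<longleftrightarrow> (\<exists>s. s < d) \<and> (\<forall>s. s < d \<longrightarrow> (\<exists>t. s < t \<and> t < d))"

text \<open>Completeness of R / (\<Inter>_{nu<delta} r_nu A) in the linear topology whose basic
  neighbourhoods of 0 are the images of r_nu A (nu < delta); sequences are lifted to R.\<close>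
definition quot_complete :: "'a::field set \<Rightarrow> 'a set \<Rightarrow> ('i::wellorder \<Rightarrow> 'a) \<Rightarrow> 'i \<Rightarrow> bool" where
  "quot_complete R A r d \<longleftrightarrow>
    (\<forall>x :: nat \<Rightarrow> 'a. (\<forall>n. x n \<in> R) \<longrightarrow>
       (\<forall>nu<d. \<exists>N. \<forall>m\<ge>N. \<forall>n\<ge>N. x m - x n \<in> scale_set (r nu) A) \<longrightarrow>
       (\<exists>y\<in>R. \<forall>nu<d. \<exists>N. \<forall>n\<ge>N. x n - y \<in> scale_set (r nu) A))"

end

(* Along a cofinal omega-sequence s of delta the system e can be normalised by
   telescoping, which yields units f_sigma with f_tau e^tau_sigma = f_sigma modulo
   r_sigma A.  Incompleteness provides a Cauchy sequence in R without a limit; sampled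
   along delta and shifted by 0 or 1 it becomes a Cauchy family of units z_sigma without
   a limit in R (R is local and some r_nu A misses 1).  Put e^delta_{sigma,0} = f_sigma
   and e^delta_{sigma,1} = z_sigma f_sigma: if units c_sigma, c_{delta,0}, c_{delta,1}
   solved both extended systems, c_{delta,1} / c_{delta,0} would be a limit of z. *)

theory Submission
  imports Defs
begin

lemma units_of_domD:
  assumes "u \<in> units_of_dom R"
  shows "u \<in> R" and "u \<noteq> 0" and "inverse u \<in> R"
  using assms by (simp_all add: units_of_dom_def)

lemma units_of_dom_inverse: "u \<in> units_of_dom R \<Longrightarrow> inverse u \<in> units_of_dom R"
  by (auto simp: units_of_dom_def)

lemma submodule_zero: "submodule_of R N \<Longrightarrow> 0 \<in> N"
  by (simp add: submodule_of_def)

lemma submodule_add: "submodule_of R N \<Longrightarrow> x \<in> N \<Longrightarrow> y \<in> N \<Longrightarrow> x + y \<in> N"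
  by (simp add: submodule_of_def)

lemma submodule_mult: "submodule_of R N \<Longrightarrow> t \<in> R \<Longrightarrow> x \<in> N \<Longrightarrow> t * x \<in> N"
  by (simp add: submodule_of_def)

lemma submodule_scale_set:
  assumes "submodule_of R A"
  shows "submodule_of R (scale_set r A)"
  unfolding submodule_of_def scale_set_def
proof (intro conjI ballI)
  have "0 = r * 0" by simp
  then show "0 \<in> {r * a |a. a \<in> A}"
    using submodule_zero[OF assms] by blast
next
  fix x y assume "x \<in> {r * a |a. a \<in> A}" "y \<in> {r * a |a. a \<in> A}"
  then obtain a b where ab: "x = r * a" "y = r * b" "a \<in> A" "b \<in> A" by blast
  then have "x + y = r * (a + b)" by (simp add: distrib_left)
  with submodule_add[OF assms ab(3,4)] show "x + y \<in> {r * a |a. a \<in> A}" by blast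
next
  fix t x assume t: "t \<in> R" and "x \<in> {r * a |a. a \<in> A}"
  then obtain a where a: "x = r * a" "a \<in> A" by blast
  then have "t * x = r * (t * a)" by (simp add: mult.left_commute)
  with submodule_mult[OF assms t a(2)] show "t * x \<in> {r * a |a. a \<in> A}" by blast
qed

lemma scale_set_antimono:
  assumes "submodule_of R A" and "dvd_in R a b"
  shows "scale_set b A \<subseteq> scale_set a A"
proof
  fix x assume "x \<in> scale_set b A"
  then obtain c where c: "x = b * c" "c \<in> A" unfolding scale_set_def by blast
  obtain t where t: "t \<in> R" "b = t * a" using assms(2) unfolding dvd_in_def by blast
  have "x = a * (t * c)" using c t by (simp add: ac_simps)
  with submodule_mult[OF assms(1) t(1) c(2)] show "x \<in> scale_set a A"
    unfolding scale_set_def by blast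
qed

lemma scale_set_chain_antimono:
  fixes r :: "'i::order \<Rightarrow> 'a::field"
  assumes "submodule_of R A" and "\<And>\<mu> \<nu>. \<mu> < \<nu> \<Longrightarrow> dvd_in R (r \<mu>) (r \<nu>)" and "\<sigma> \<le> \<tau>"
  shows "scale_set (r \<tau>) A \<subseteq> scale_set (r \<sigma>) A"
proof (cases "\<sigma> = \<tau>")
  case False
  with assms(3) have "\<sigma> < \<tau>" by (simp add: order.strict_iff_order)
  then show ?thesis by (rule scale_set_antimono[OF assms(1) assms(2)])
qed simp

lemma unit_notin_submodule:
  assumes "submodule_of R N" and "1 \<notin> N" and "u \<in> units_of_dom R"
  shows "u \<notin> N"
proof
  assume "u \<in> N"
  then have "inverse u * u \<in> N"
    using submodule_mult[OF assms(1) units_of_domD(3)[OF assms(3)]] by blast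
  then show False using assms(2) units_of_domD(2)[OF assms(3)] by simp
qed

lemma subset_submodule_if_one_mem:
  assumes "submodule_of R N" and "1 \<in> N"
  shows "R \<subseteq> N"
  using submodule_mult[OF assms(1) _ assms(2)] by auto

lemma coherent_mult:
  assumes "submodule_of R N"
    and "g * a - f \<in> N" and "y - z \<in> N" and "y \<in> R" and "f \<in> R"
  shows "y * g * a - z * f \<in> N"
proof -
  have "y * (g * a - f) + f * (y - z) \<in> N"
    using assms by (simp add: submodule_add submodule_mult)
  then show ?thesis by (simp add: algebra_simps)
qed

context
  fixes R :: "'a::field set"
  assumes val: "valuation_domain R"
begin

lemma valuation_domain_zero: "0 \<in> R"
  using val by (simp add: valuation_domain_def)

lemma valuation_domain_one: "1 \<in> R"
  using val by (simp add: valuation_domain_def)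

lemma valuation_domain_add: "x \<in> R \<Longrightarrow> y \<in> R \<Longrightarrow> x + y \<in> R"
  using val by (simp add: valuation_domain_def)

lemma valuation_domain_mult: "x \<in> R \<Longrightarrow> y \<in> R \<Longrightarrow> x * y \<in> R"
  using val by (simp add: valuation_domain_def)

lemma valuation_domain_uminus: "x \<in> R \<Longrightarrow> - x \<in> R"
  using val by (simp add: valuation_domain_def)

lemma valuation_domain_diff: "x \<in> R \<Longrightarrow> y \<in> R \<Longrightarrow> x - y \<in> R"
  using valuation_domain_add valuation_domain_uminus by fastforce

lemma valuation_domain_inverse_cases: "q \<noteq> 0 \<Longrightarrow> q \<in> R \<or> inverse q \<in> R"
  using val by (simp add: valuation_domain_def)

lemma one_in_units_of_dom: "1 \<in> units_of_dom R"
  by (simp add: units_of_dom_def valuation_domain_one)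

lemma units_of_dom_mult:
  assumes "u \<in> units_of_dom R" and "v \<in> units_of_dom R"
  shows "u * v \<in> units_of_dom R"
  using assms by (auto simp: units_of_dom_def inverse_mult_distrib valuation_domain_mult)

lemma inverse_mem_if_sum_unit:
  assumes "a \<noteq> 0" and "b / a \<in> R" and "a + b \<in> units_of_dom R"
  shows "inverse a \<in> R"
proof -
  have "inverse a = (1 + b / a) * inverse (a + b)"
    using assms(1) units_of_domD(2)[OF assms(3)] by (simp add: field_simps)
  then show ?thesis
    using assms(2) units_of_domD(3)[OF assms(3)]
    by (simp add: valuation_domain_add valuation_domain_mult valuation_domain_one)
qed

lemma nonunits_add:
  assumes "a \<in> R" "a \<notin> units_of_dom R" "b \<in> R" "b \<notin> units_of_dom R"
  shows "a + b \<notin> units_of_dom R"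
proof
  assume ab: "a + b \<in> units_of_dom R"
  then have "a \<noteq> 0" "b \<noteq> 0" using assms by auto
  then have "b / a \<in> R \<or> a / b \<in> R"
    using valuation_domain_inverse_cases[of "b / a"] by (simp add: inverse_divide)
  then show False
  proof
    assume "b / a \<in> R"
    then have "inverse a \<in> R" using inverse_mem_if_sum_unit[OF \<open>a \<noteq> 0\<close> _ ab] by blast
    then show False using assms(1,2) \<open>a \<noteq> 0\<close> by (simp add: units_of_dom_def)
  next
    assume "a / b \<in> R"
    moreover have "b + a \<in> units_of_dom R" using ab by (simp add: add.commute)
    ultimately have "inverse b \<in> R" using inverse_mem_if_sum_unit[OF \<open>b \<noteq> 0\<close>] by blast
    then show False using assms(3,4) \<open>b \<noteq> 0\<close> by (simp add: units_of_dom_def)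
  qed
qed

lemma uminus_nonunit:
  assumes "m \<notin> units_of_dom R"
  shows "- m \<notin> units_of_dom R"
proof
  assume "- m \<in> units_of_dom R"
  then have "- m \<in> R" "inverse (- m) \<in> R" "m \<noteq> 0"
    by (auto simp: units_of_dom_def)
  then have "m \<in> R" "inverse m \<in> R"
    using valuation_domain_uminus[of "- m"] valuation_domain_uminus[of "inverse (- m)"] by simp_all
  then show False using assms \<open>m \<noteq> 0\<close> by (simp add: units_of_dom_def)
qed

lemma unit_add_nonunit:
  assumes "u \<in> units_of_dom R" and "m \<in> R" and "m \<notin> units_of_dom R"
  shows "u + m \<in> units_of_dom R"
proof (rule ccontr)
  assume "u + m \<notin> units_of_dom R"
  moreover have "u + m \<in> R"
    using valuation_domain_add[OF units_of_domD(1)[OF assms(1)] assms(2)] .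
  ultimately have "(u + m) + - m \<notin> units_of_dom R"
    using nonunits_add valuation_domain_uminus[OF assms(2)] uminus_nonunit[OF assms(3)] by blast
  then show False using assms(1) by simp
qed

(* N \<inter> R consists of non-units, so a + (N \<inter> R) lies either inside the units or
   entirely outside them; in the latter case adding 1 moves it inside. *)
lemma shift_into_units:
  assumes "submodule_of R N" and "1 \<notin> N" and "a \<in> R"
  obtains c where "c \<in> R" and "\<And>d. d \<in> R \<Longrightarrow> d \<in> N \<Longrightarrow> a + d + c \<in> units_of_dom R"
proof -
  have nonunit: "d \<notin> units_of_dom R" if "d \<in> N" for d
    using unit_notin_submodule[OF assms(1,2)] that by blast
  show thesis
  proof (cases "a \<in> units_of_dom R")
    case True
    then show ?thesis
      using that[of 0] unit_add_nonunit[OF True] nonunit valuation_domain_zero by simp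
  next
    case False
    have "1 + (a + d) \<in> units_of_dom R" if "d \<in> R" "d \<in> N" for d
      using unit_add_nonunit[OF one_in_units_of_dom] nonunits_add[OF assms(3) False]
        nonunit valuation_domain_add[OF assms(3)] that by simp
    then show ?thesis
      using that[of 1] valuation_domain_one by (simp add: ac_simps)
  qed
qed

lemma submodule_uminus: "submodule_of R N \<Longrightarrow> x \<in> N \<Longrightarrow> - x \<in> N"
  using submodule_mult[of R N "- 1" x] valuation_domain_one valuation_domain_uminus by simp

lemma submodule_diff: "submodule_of R N \<Longrightarrow> x \<in> N \<Longrightarrow> y \<in> N \<Longrightarrow> x - y \<in> N"
  using submodule_add[of R N x "- y"] submodule_uminus by simp

lemma ratio_approximates:
  assumes N: "submodule_of R N"
    and c\<^sub>0: "c\<^sub>0 \<in> units_of_dom R" and "c\<^sub>1 \<in> R" and "z \<in> R"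
    and "c\<^sub>0 - f * c \<in> N" and "c\<^sub>1 - z * f * c \<in> N"
  shows "z - c\<^sub>1 * inverse c\<^sub>0 \<in> N"
proof -
  have "(c\<^sub>1 - z * f * c) - z * (c\<^sub>0 - f * c) \<in> N"
    using assms by (simp add: submodule_diff submodule_mult)
  then have "- inverse c\<^sub>0 * ((c\<^sub>1 - z * f * c) - z * (c\<^sub>0 - f * c)) \<in> N"
    using submodule_mult[OF N valuation_domain_uminus[OF units_of_domD(3)[OF c\<^sub>0]]] by blast
  moreover have "- inverse c\<^sub>0 * ((c\<^sub>1 - z * f * c) - z * (c\<^sub>0 - f * c)) = z - c\<^sub>1 * inverse c\<^sub>0"
    using units_of_domD(2)[OF c\<^sub>0] by (simp add: field_simps)
  ultimately show ?thesis by simp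
qed

end

lemma limit_cofinal_sequence:
  fixes \<delta> :: "'i::wellorder"
  assumes "countable {..<\<delta>}" and "is_limit \<delta>"
  obtains s :: "nat \<Rightarrow> 'i" where "strict_mono s" and "\<And>n. s n < \<delta>"
    and "\<And>\<sigma>. \<sigma> < \<delta> \<Longrightarrow> \<exists>n. \<sigma> < s n"
proof -
  have "{..<\<delta>} \<noteq> {}" using assms(2) by (auto simp: is_limit_def)
  define enum where "enum = from_nat_into {..<\<delta>}"
  have range_enum: "range enum = {..<\<delta>}"
    using assms(1) \<open>{..<\<delta>} \<noteq> {}\<close> by (simp add: enum_def)
  define above where "above = (\<lambda>x::'i. SOME t. x < t \<and> t < \<delta>)"
  have above: "x < \<delta> \<Longrightarrow> x < above x \<and> above x < \<delta>" for x
    unfolding above_def by (rule someI_ex) (use assms(2) in \<open>auto simp: is_limit_def\<close>)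
  define s where "s = rec_nat (enum 0) (\<lambda>n p. above (max p (enum (Suc n))))"
  have s_0: "s 0 = enum 0" and s_Suc: "s (Suc n) = above (max (s n) (enum (Suc n)))" for n
    by (simp_all add: s_def)
  have enum_less: "enum n < \<delta>" for n using range_enum by auto
  have s_less: "s n < \<delta>" for n
    by (induction n) (auto simp: s_0 s_Suc enum_less above max_def)
  have s_Suc_above: "s n < s (Suc n) \<and> enum (Suc n) < s (Suc n)" for n
    using above[of "max (s n) (enum (Suc n))"] s_less[of n] enum_less[of "Suc n"]
    by (auto simp: s_Suc max_def split: if_splits)
  have "enum n \<le> s n" for n
    by (cases n) (auto simp: s_0 s_Suc_above less_imp_le)
  then have "\<exists>n. \<sigma> < s n" if "\<sigma> < \<delta>" for \<sigma>
    using that range_enum s_Suc_above by (metis lessThan_iff imageE order.strict_trans1)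
  moreover have "strict_mono s" using s_Suc_above by (simp add: strict_mono_Suc_iff)
  ultimately show thesis using that s_less by blast
qed

context
  fixes R :: "'a::field set" and M :: "'i::wellorder \<Rightarrow> 'a set"
    and \<delta> :: 'i and e :: "'i \<Rightarrow> 'i \<Rightarrow> 'a"
  assumes val: "valuation_domain R"
    and M_sub: "\<And>\<sigma>. submodule_of R (M \<sigma>)"
    and e_unit: "\<And>\<sigma> \<tau>. \<sigma> < \<tau> \<Longrightarrow> \<tau> < \<delta> \<Longrightarrow> e \<tau> \<sigma> \<in> units_of_dom R"
    and e_coh: "\<And>\<sigma> \<tau> \<rho>. \<sigma> < \<tau> \<Longrightarrow> \<tau> < \<rho> \<Longrightarrow> \<rho> < \<delta> \<Longrightarrow>
                  e \<rho> \<tau> * e \<tau> \<sigma> - e \<rho> \<sigma> \<in> M \<sigma>"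
begin

lemma telescoping_coherence:
  fixes s :: "nat \<Rightarrow> 'i"
  assumes s: "strict_mono s" "\<And>n. s n < \<delta>"
    and u: "\<And>n. u n \<in> R" "\<And>n. u (Suc n) * e (s (Suc n)) (s n) = u n"
    and "\<sigma> < s k" and "k \<le> m"
  shows "u m * e (s m) \<sigma> - u k * e (s k) \<sigma> \<in> M \<sigma>"
  using \<open>k \<le> m\<close>
proof (induction m rule: dec_induct)
  case base
  then show ?case using submodule_zero[OF M_sub] by simp
next
  case (step m)
  have "\<sigma> < s m" using assms(5) step(1) s(1) by (metis order.strict_trans2 strict_mono_less_eq)
  then have "u (Suc m) * (e (s (Suc m)) (s m) * e (s m) \<sigma> - e (s (Suc m)) \<sigma>) \<in> M \<sigma>"
    using submodule_mult[OF M_sub u(1)] e_coh strict_monoD[OF s(1) lessI] s(2) by blast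
  moreover have "u (Suc m) * (e (s (Suc m)) (s m) * e (s m) \<sigma> - e (s (Suc m)) \<sigma>)
      = u m * e (s m) \<sigma> - u (Suc m) * e (s (Suc m)) \<sigma>"
    using u(2)[of m] by (simp add: algebra_simps)
  ultimately have "u m * e (s m) \<sigma> - u (Suc m) * e (s (Suc m)) \<sigma> \<in> M \<sigma>"
    by simp
  from submodule_diff[OF val M_sub step.IH this] show ?case by (simp add: algebra_simps)
qed

lemma coherent_units_exist:
  fixes s :: "nat \<Rightarrow> 'i"
  assumes s: "strict_mono s" "\<And>n. s n < \<delta>" "\<And>\<sigma>. \<sigma> < \<delta> \<Longrightarrow> \<exists>n. \<sigma> < s n"
  obtains f where "\<And>\<sigma>. \<sigma> < \<delta> \<Longrightarrow> f \<sigma> \<in> units_of_dom R"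
    and "\<And>\<sigma> \<tau>. \<sigma> < \<tau> \<Longrightarrow> \<tau> < \<delta> \<Longrightarrow> f \<tau> * e \<tau> \<sigma> - f \<sigma> \<in> M \<sigma>"
proof -
  have step_unit: "e (s (Suc n)) (s n) \<in> units_of_dom R" for n
    using e_unit strict_monoD[OF s(1) lessI] s(2) by blast
  (* u n * e^{s n}_sigma does not depend on n modulo M sigma, see telescoping_coherence *)
  define u where "u = rec_nat 1 (\<lambda>n p. p * inverse (e (s (Suc n)) (s n)))"
  have u_0: "u 0 = 1" and u_Suc: "u (Suc n) = u n * inverse (e (s (Suc n)) (s n))" for n
    by (simp_all add: u_def)
  have u_unit: "u n \<in> units_of_dom R" for n
    by (induction n) (simp_all add: u_0 u_Suc one_in_units_of_dom[OF val]
        units_of_dom_mult[OF val] units_of_dom_inverse step_unit)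
  have u_step: "u (Suc n) * e (s (Suc n)) (s n) = u n" for n
    using units_of_domD(2)[OF step_unit] by (simp add: u_Suc)
  define level where "level \<sigma> = (LEAST n. \<sigma> < s n)" for \<sigma>
  have level_above: "\<sigma> < s (level \<sigma>)" if "\<sigma> < \<delta>" for \<sigma>
    unfolding level_def using s(3)[OF that] by (rule LeastI_ex)
  have level_least: "\<sigma> < s n \<Longrightarrow> level \<sigma> \<le> n" for \<sigma> n
    unfolding level_def by (rule Least_le)
  define f where "f \<sigma> = u (level \<sigma>) * e (s (level \<sigma>)) \<sigma>" for \<sigma>
  show thesis
  proof (rule that)
    show "f \<sigma> \<in> units_of_dom R" if "\<sigma> < \<delta>" for \<sigma>
      unfolding f_def using units_of_dom_mult[OF val u_unit e_unit[OF level_above[OF that] s(2)]] .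
  next
    fix \<sigma> \<tau> assume "\<sigma> < \<tau>" "\<tau> < \<delta>"
    define k m where "k = level \<sigma>" and "m = level \<tau>"
    have "\<tau> < s m" using level_above[OF \<open>\<tau> < \<delta>\<close>] by (simp add: m_def)
    then have "k \<le> m" using level_least \<open>\<sigma> < \<tau>\<close> by (simp add: k_def)
    have "\<sigma> < s k" using level_above \<open>\<sigma> < \<tau>\<close> \<open>\<tau> < \<delta>\<close> k_def by force
    have "u m * (e (s m) \<tau> * e \<tau> \<sigma> - e (s m) \<sigma>) \<in> M \<sigma>"
      using submodule_mult[OF M_sub units_of_domD(1)[OF u_unit]] e_coh[OF \<open>\<sigma> < \<tau>\<close> \<open>\<tau> < s m\<close> s(2)] .
    moreover have "u m * e (s m) \<sigma> - u k * e (s k) \<sigma> \<in> M \<sigma>"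
      using telescoping_coherence[OF s(1,2) units_of_domD(1)[OF u_unit] u_step \<open>\<sigma> < s k\<close> \<open>k \<le> m\<close>] .
    ultimately have "u m * (e (s m) \<tau> * e \<tau> \<sigma> - e (s m) \<sigma>)
        + (u m * e (s m) \<sigma> - u k * e (s k) \<sigma>) \<in> M \<sigma>"
      by (rule submodule_add[OF M_sub])
    then show "f \<tau> * e \<tau> \<sigma> - f \<sigma> \<in> M \<sigma>"
      by (simp add: f_def k_def m_def algebra_simps)
  qed
qed

end

context
  fixes R :: "'a::field set" and M :: "'i::wellorder \<Rightarrow> 'a set" and \<delta> :: 'i
    and x :: "nat \<Rightarrow> 'a"
  assumes val: "valuation_domain R"
    and M_sub: "\<And>\<sigma>. submodule_of R (M \<sigma>)"
    and M_antimono: "\<And>\<sigma> \<tau>. \<sigma> \<le> \<tau> \<Longrightarrow> M \<tau> \<subseteq> M \<sigma>"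
    and x_mem: "\<And>n. x n \<in> R"
    and cauchy: "\<And>\<nu>. \<nu> < \<delta> \<Longrightarrow> \<exists>N. \<forall>m\<ge>N. \<forall>n\<ge>N. x m - x n \<in> M \<nu>"
    and divergent: "\<not> (\<exists>w\<in>R. \<forall>\<nu><\<delta>. \<exists>N. \<forall>n\<ge>N. x n - w \<in> M \<nu>)"
begin

lemma cauchy_family_of_cauchy_seq:
  assumes "\<nu>\<^sub>0 < \<delta>"
  obtains y where "\<And>\<sigma>. y \<sigma> \<in> R" and "\<And>\<sigma>. y \<sigma> - y \<nu>\<^sub>0 \<in> M \<nu>\<^sub>0"
    and "\<And>\<sigma> \<tau>. \<sigma> < \<tau> \<Longrightarrow> \<tau> < \<delta> \<Longrightarrow> y \<tau> - y \<sigma> \<in> M \<sigma>"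
    and "\<And>w. w \<in> R \<Longrightarrow> \<exists>\<sigma><\<delta>. y \<sigma> - w \<notin> M \<sigma>"
proof -
  obtain C where C: "\<And>\<nu> m n. \<nu> < \<delta> \<Longrightarrow> C \<nu> \<le> m \<Longrightarrow> C \<nu> \<le> n \<Longrightarrow> x m - x n \<in> M \<nu>"
    using cauchy by metis
  define y where "y \<sigma> = x (max (C \<sigma>) (C \<nu>\<^sub>0))" for \<sigma>
  have tail: "y \<sigma> - x n \<in> M \<sigma>" if "\<sigma> < \<delta>" "C \<sigma> \<le> n" for \<sigma> n
    unfolding y_def using C that by simp
  show thesis
  proof (rule that)
    show "y \<sigma> \<in> R" for \<sigma> by (simp add: y_def x_mem)
    show "y \<sigma> - y \<nu>\<^sub>0 \<in> M \<nu>\<^sub>0" for \<sigma>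
      unfolding y_def using C[OF assms] by simp
  next
    fix \<sigma> \<tau> assume "\<sigma> < \<tau>" "\<tau> < \<delta>"
    define n where "n = max (C \<sigma>) (C \<tau>)"
    have "y \<tau> - x n \<in> M \<tau>" using tail[OF \<open>\<tau> < \<delta>\<close>] by (simp add: n_def)
    then have "y \<tau> - x n \<in> M \<sigma>" using M_antimono[OF less_imp_le[OF \<open>\<sigma> < \<tau>\<close>]] by blast
    moreover have "y \<sigma> - x n \<in> M \<sigma>" using tail \<open>\<sigma> < \<tau>\<close> \<open>\<tau> < \<delta>\<close> by (simp add: n_def)
    ultimately have "(y \<tau> - x n) - (y \<sigma> - x n) \<in> M \<sigma>" by (rule submodule_diff[OF val M_sub])
    then show "y \<tau> - y \<sigma> \<in> M \<sigma>" by simp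
  next
    fix w assume "w \<in> R"
    then obtain \<nu> where "\<nu> < \<delta>" and escape: "\<And>N. \<exists>n\<ge>N. x n - w \<notin> M \<nu>"
      using divergent by blast
    have "y \<nu> - w \<notin> M \<nu>"
    proof
      assume "y \<nu> - w \<in> M \<nu>"
      obtain n where "n \<ge> C \<nu>" "x n - w \<notin> M \<nu>" using escape by blast
      moreover have "(y \<nu> - w) - (y \<nu> - x n) \<in> M \<nu>"
        using submodule_diff[OF val M_sub \<open>y \<nu> - w \<in> M \<nu>\<close> tail[OF \<open>\<nu> < \<delta>\<close>]] \<open>n \<ge> C \<nu>\<close> .
      ultimately show False by simp
    qed
    then show "\<exists>\<sigma><\<delta>. y \<sigma> - w \<notin> M \<sigma>" using \<open>\<nu> < \<delta>\<close> by blast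
  qed
qed

lemma unit_cauchy_family_of_cauchy_seq:
  obtains z where "\<And>\<sigma>. \<sigma> < \<delta> \<Longrightarrow> z \<sigma> \<in> units_of_dom R"
    and "\<And>\<sigma> \<tau>. \<sigma> < \<tau> \<Longrightarrow> \<tau> < \<delta> \<Longrightarrow> z \<tau> - z \<sigma> \<in> M \<sigma>"
    and "\<And>w. w \<in> R \<Longrightarrow> \<exists>\<sigma><\<delta>. z \<sigma> - w \<notin> M \<sigma>"
proof -
  have "\<exists>\<nu><\<delta>. 1 \<notin> M \<nu>"
  proof (rule ccontr)
    assume "\<not> ?thesis"
    then have "R \<subseteq> M \<nu>" if "\<nu> < \<delta>" for \<nu> using subset_submodule_if_one_mem[OF M_sub] that by blast
    then have "x n - x 0 \<in> M \<nu>" if "\<nu> < \<delta>" for \<nu> n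
      using valuation_domain_diff[OF val x_mem x_mem] that by blast
    then show False using divergent x_mem by blast
  qed
  then obtain \<nu>\<^sub>0 where "\<nu>\<^sub>0 < \<delta>" and "1 \<notin> M \<nu>\<^sub>0" by blast
  obtain y where y_mem: "\<And>\<sigma>. y \<sigma> \<in> R" and y_near: "\<And>\<sigma>. y \<sigma> - y \<nu>\<^sub>0 \<in> M \<nu>\<^sub>0"
    and y_coh: "\<And>\<sigma> \<tau>. \<sigma> < \<tau> \<Longrightarrow> \<tau> < \<delta> \<Longrightarrow> y \<tau> - y \<sigma> \<in> M \<sigma>"
    and y_nolim: "\<And>w. w \<in> R \<Longrightarrow> \<exists>\<sigma><\<delta>. y \<sigma> - w \<notin> M \<sigma>"
    using cauchy_family_of_cauchy_seq[OF \<open>\<nu>\<^sub>0 < \<delta>\<close>] by blast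
  obtain c where "c \<in> R" and c: "\<And>d. d \<in> R \<Longrightarrow> d \<in> M \<nu>\<^sub>0 \<Longrightarrow> y \<nu>\<^sub>0 + d + c \<in> units_of_dom R"
    using shift_into_units[OF val M_sub \<open>1 \<notin> M \<nu>\<^sub>0\<close> y_mem] by blast
  show thesis
  proof (rule that[of "\<lambda>\<sigma>. y \<sigma> + c"])
    show "y \<sigma> + c \<in> units_of_dom R" for \<sigma>
      using c[OF valuation_domain_diff[OF val y_mem y_mem] y_near] by simp
    show "(y \<tau> + c) - (y \<sigma> + c) \<in> M \<sigma>" if "\<sigma> < \<tau>" "\<tau> < \<delta>" for \<sigma> \<tau>
      using y_coh[OF that] by simp
    show "\<exists>\<sigma><\<delta>. (y \<sigma> + c) - w \<notin> M \<sigma>" if "w \<in> R" for w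
      using y_nolim[OF valuation_domain_diff[OF val that \<open>c \<in> R\<close>]] by (simp add: algebra_simps)
  qed
qed

end


definition extension_pair :: "('i \<Rightarrow> 'a::times) \<Rightarrow> ('i \<Rightarrow> 'a) \<Rightarrow> 'i \<Rightarrow> nat \<Rightarrow> 'a" where
  "extension_pair f z \<sigma> j = (if j = 0 then f \<sigma> else z \<sigma> * f \<sigma>)"

context
  fixes R :: "'a::field set" and M :: "'i::wellorder \<Rightarrow> 'a set" and \<delta> :: 'i
    and e :: "'i \<Rightarrow> 'i \<Rightarrow> 'a" and f z :: "'i \<Rightarrow> 'a"
  assumes val: "valuation_domain R"
    and M_sub: "\<And>\<sigma>. submodule_of R (M \<sigma>)"
    and f_unit: "\<And>\<sigma>. \<sigma> < \<delta> \<Longrightarrow> f \<sigma> \<in> units_of_dom R"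
    and f_coh: "\<And>\<sigma> \<tau>. \<sigma> < \<tau> \<Longrightarrow> \<tau> < \<delta> \<Longrightarrow> f \<tau> * e \<tau> \<sigma> - f \<sigma> \<in> M \<sigma>"
    and z_unit: "\<And>\<sigma>. \<sigma> < \<delta> \<Longrightarrow> z \<sigma> \<in> units_of_dom R"
    and z_coh: "\<And>\<sigma> \<tau>. \<sigma> < \<tau> \<Longrightarrow> \<tau> < \<delta> \<Longrightarrow> z \<tau> - z \<sigma> \<in> M \<sigma>"
    and z_nolim: "\<And>w. w \<in> R \<Longrightarrow> \<exists>\<sigma><\<delta>. z \<sigma> - w \<notin> M \<sigma>"
begin

lemma extension_pair_units: "\<forall>\<sigma><\<delta>. \<forall>j\<in>{0,1}. extension_pair f z \<sigma> j \<in> units_of_dom R"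
  using f_unit units_of_dom_mult[OF val z_unit f_unit] by (simp add: extension_pair_def)

lemma extension_pair_coherent:
  "\<forall>\<sigma> \<tau>. \<sigma> < \<tau> \<and> \<tau> < \<delta> \<longrightarrow>
     (\<forall>j\<in>{0,1}. extension_pair f z \<tau> j * e \<tau> \<sigma> - extension_pair f z \<sigma> j \<in> M \<sigma>)"
proof (intro allI impI ballI)
  fix \<sigma> \<tau> j assume "\<sigma> < \<tau> \<and> \<tau> < \<delta>"
  then have "\<sigma> < \<tau>" "\<tau> < \<delta>" "\<sigma> < \<delta>" by auto
  have "z \<tau> * f \<tau> * e \<tau> \<sigma> - z \<sigma> * f \<sigma> \<in> M \<sigma>"
    using coherent_mult[OF M_sub f_coh[OF \<open>\<sigma> < \<tau>\<close> \<open>\<tau> < \<delta>\<close>] z_coh[OF \<open>\<sigma> < \<tau>\<close> \<open>\<tau> < \<delta>\<close>]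
        units_of_domD(1)[OF z_unit[OF \<open>\<tau> < \<delta>\<close>]] units_of_domD(1)[OF f_unit[OF \<open>\<sigma> < \<delta>\<close>]]] .
  then show "extension_pair f z \<tau> j * e \<tau> \<sigma> - extension_pair f z \<sigma> j \<in> M \<sigma>"
    using f_coh[OF \<open>\<sigma> < \<tau>\<close> \<open>\<tau> < \<delta>\<close>] by (simp add: extension_pair_def)
qed

lemma extension_pair_no_common_solution:
  "\<not> (\<exists>c cd. (\<forall>j\<in>{0,1}. cd j \<in> units_of_dom R) \<and>
      (\<forall>\<sigma><\<delta>. \<forall>j\<in>{0,1}. cd j - extension_pair f z \<sigma> j * c \<sigma> \<in> M \<sigma>))"
proof
  assume "\<exists>c cd. (\<forall>j\<in>{0,1}. cd j \<in> units_of_dom R) \<and>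
      (\<forall>\<sigma><\<delta>. \<forall>j\<in>{0,1}. cd j - extension_pair f z \<sigma> j * c \<sigma> \<in> M \<sigma>)"
  then obtain c cd where "\<forall>j\<in>{0,1}. cd j \<in> units_of_dom R"
    and solves: "\<forall>\<sigma><\<delta>. \<forall>j\<in>{0,1}. cd j - extension_pair f z \<sigma> j * c \<sigma> \<in> M \<sigma>"
    by blast
  then have cd_unit: "cd 0 \<in> units_of_dom R" "cd 1 \<in> units_of_dom R" by simp_all
  have "cd 1 * inverse (cd 0) \<in> R"
    using valuation_domain_mult[OF val units_of_domD(1)[OF cd_unit(2)] units_of_domD(3)[OF cd_unit(1)]] .
  then obtain \<sigma> where "\<sigma> < \<delta>" and "z \<sigma> - cd 1 * inverse (cd 0) \<notin> M \<sigma>"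
    using z_nolim by blast
  moreover have "cd 0 - f \<sigma> * c \<sigma> \<in> M \<sigma>" and "cd 1 - z \<sigma> * f \<sigma> * c \<sigma> \<in> M \<sigma>"
    using solves \<open>\<sigma> < \<delta>\<close> by (simp_all add: extension_pair_def)
  ultimately show False
    using ratio_approximates[OF val M_sub cd_unit(1) units_of_domD(1)[OF cd_unit(2)]
        units_of_domD(1)[OF z_unit[OF \<open>\<sigma> < \<delta>\<close>]]] by blast
qed

end

theorem lemma4:
  fixes R A J :: "'a::field set" and r :: "'i::wellorder \<Rightarrow> 'a"
    and \<delta> :: 'i and e :: "'i \<Rightarrow> 'i \<Rightarrow> 'a"
  assumes val: "valuation_domain R"
    and qf: "quotient_field_of R"
    and ne: "R \<noteq> UNIV"
    and om: "omega1_type TYPE('i)"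
    and subA: "submodule_of R A" and subJ: "submodule_of R J" and AJ: "A \<subseteq> J"
    and r_in: "\<And>nu. r nu \<in> R \<and> r nu \<noteq> 0"
    and r_dvd: "\<And>mu nu. mu < nu \<Longrightarrow> dvd_in R (r mu) (r nu)"
    and J_eq: "J = (\<Union>nu. {inverse (r nu) * x | x. x \<in> R})"
    and lim: "is_limit \<delta>"
    and notc: "\<not> quot_complete R A r \<delta>"
    and e_unit: "\<And>\<sigma> \<tau>. \<sigma> < \<tau> \<Longrightarrow> \<tau> < \<delta> \<Longrightarrow> e \<tau> \<sigma> \<in> units_of_dom R"
    and e_coh: "\<And>\<sigma> \<tau> \<rho>. \<sigma> < \<tau> \<Longrightarrow> \<tau> < \<rho> \<Longrightarrow> \<rho> < \<delta> \<Longrightarrow>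
                  e \<rho> \<tau> * e \<tau> \<sigma> - e \<rho> \<sigma> \<in> scale_set (r \<sigma>) A"
  shows "\<exists>ed :: 'i \<Rightarrow> nat \<Rightarrow> 'a.
           (\<forall>\<sigma><\<delta>. \<forall>j\<in>{0,1}. ed \<sigma> j \<in> units_of_dom R) \<and>
           (\<forall>\<sigma> \<tau>. \<sigma> < \<tau> \<and> \<tau> < \<delta> \<longrightarrow>
              (\<forall>j\<in>{0,1}. ed \<tau> j * e \<tau> \<sigma> - ed \<sigma> j \<in> scale_set (r \<sigma>) A)) \<and>
           \<not> (\<exists>(c :: 'i \<Rightarrow> 'a) (cd :: nat \<Rightarrow> 'a).
                (\<forall>\<sigma><\<delta>. c \<sigma> \<in> units_of_dom R) \<and>
                (\<forall>j\<in>{0,1}. cd j \<in> units_of_dom R) \<and>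
                (\<forall>\<sigma> \<tau>. \<sigma> < \<tau> \<and> \<tau> < \<delta> \<longrightarrow> c \<tau> - e \<tau> \<sigma> * c \<sigma> \<in> scale_set (r \<sigma>) A) \<and>
                (\<forall>\<sigma><\<delta>. \<forall>j\<in>{0,1}. cd j - ed \<sigma> j * c \<sigma> \<in> scale_set (r \<sigma>) A))"
proof -
  define M where "M \<sigma> = scale_set (r \<sigma>) A" for \<sigma>
  have M_sub: "submodule_of R (M \<sigma>)" for \<sigma>
    unfolding M_def by (rule submodule_scale_set[OF subA])
  have M_antimono: "M \<tau> \<subseteq> M \<sigma>" if "\<sigma> \<le> \<tau>" for \<sigma> \<tau>
    unfolding M_def by (rule scale_set_chain_antimono[OF subA r_dvd that])
  have "countable {..<\<delta>}" using om by (simp add: omega1_type_def)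
  then obtain s :: "nat \<Rightarrow> 'i" where s: "strict_mono s" "\<And>n. s n < \<delta>" "\<And>\<sigma>. \<sigma> < \<delta> \<Longrightarrow> \<exists>n. \<sigma> < s n"
    using limit_cofinal_sequence[OF _ lim] by metis
  obtain f where f_unit: "\<And>\<sigma>. \<sigma> < \<delta> \<Longrightarrow> f \<sigma> \<in> units_of_dom R"
    and f_coh: "\<And>\<sigma> \<tau>. \<sigma> < \<tau> \<Longrightarrow> \<tau> < \<delta> \<Longrightarrow> f \<tau> * e \<tau> \<sigma> - f \<sigma> \<in> M \<sigma>"
    using coherent_units_exist[where M = M and e = e, OF val M_sub e_unit e_coh[folded M_def] s] by blast
  obtain x :: "nat \<Rightarrow> 'a" where "\<And>n. x n \<in> R"
    and "\<And>\<nu>. \<nu> < \<delta> \<Longrightarrow> \<exists>N. \<forall>m\<ge>N. \<forall>n\<ge>N. x m - x n \<in> M \<nu>"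
    and "\<not> (\<exists>w\<in>R. \<forall>\<nu><\<delta>. \<exists>N. \<forall>n\<ge>N. x n - w \<in> M \<nu>)"
    using notc unfolding quot_complete_def M_def by blast
  then obtain z where z_unit: "\<And>\<sigma>. \<sigma> < \<delta> \<Longrightarrow> z \<sigma> \<in> units_of_dom R"
    and z_coh: "\<And>\<sigma> \<tau>. \<sigma> < \<tau> \<Longrightarrow> \<tau> < \<delta> \<Longrightarrow> z \<tau> - z \<sigma> \<in> M \<sigma>"
    and z_nolim: "\<And>w. w \<in> R \<Longrightarrow> \<exists>\<sigma><\<delta>. z \<sigma> - w \<notin> M \<sigma>"
    using unit_cauchy_family_of_cauchy_seq[where M = M and \<delta> = \<delta>, OF val M_sub M_antimono] by blast
  note pair_facts = val M_sub f_unit f_coh z_unit z_coh z_nolim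
  show ?thesis
  proof (intro exI[of _ "extension_pair f z"] conjI)
    show "\<forall>\<sigma><\<delta>. \<forall>j\<in>{0,1}. extension_pair f z \<sigma> j \<in> units_of_dom R"
      by (rule extension_pair_units[OF pair_facts])
    show "\<forall>\<sigma> \<tau>. \<sigma> < \<tau> \<and> \<tau> < \<delta> \<longrightarrow> (\<forall>j\<in>{0,1}.
        extension_pair f z \<tau> j * e \<tau> \<sigma> - extension_pair f z \<sigma> j \<in> scale_set (r \<sigma>) A)"
      using extension_pair_coherent[where e = e, OF pair_facts] unfolding M_def .
  qed (use extension_pair_no_common_solution[OF pair_facts] in \<open>unfold M_def, blast\<close>)
qed

end
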